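(* In the setting described in the context, fix $\vartheta\in(0,\infty)$, write $\mathrm{range}(f')=(a,b)$ and let $g:(a,b)\to(0,\infty)$ be the inverse of $f'$; for $c\in\mathbb{R}$ put $I_c=\{\vartheta^{-1}y+c: y\in(a,b)\}$. If $f'(x)\to\infty$ as $x\to\infty$ and, for every $c\in\mathbb{R}$, the random variable $g\bigl(\vartheta(\ell(T,\cdot)-c)\bigr)\mathbf{1}_{\{\ell(T,\cdot)\in I_c\}}$ is $\mathsf{P}$-integrable, then there exist a constant $c\in\mathbb{R}$ and a function $z:\mathbb{R}\to\mathbb{R}_+$ such that $x-f'(z(x))/\vartheta=c$ for $x\in I_c$, $z(x)=0$ for $x\notin I_c$, $\mathsf{E}\bigl(z(\ell(T,\cdot))\bigr)=1$ and $\mathsf{P}\bigl(\ell(T,\cdot)<\sup I_c\bigr)=1$.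
   Context: Fix $T\in(0,\infty)$, $d\in\mathbb{N}$, let $\Omega=D([0,T],\mathbb{R}^d)$ be the set of càdlàg paths with canonical process $X(t)(\omega)=\omega(t)$ and natural filtration $(\mathcal{F}^0_t)$. $\mathsf{P}$ is a probability measure on $(\Omega,\mathcal{F}^0_T)$ with $\mathsf{P}(X(0)=0)=1$; $\mathsf{E}$ denotes $\mathsf{P}$-expectation. $f:\mathbb{R}_+\to\mathbb{R}$ is twice differentiable and strictly convex with $f(1)=0$, so $f'$ is continuous strictly increasing on $(0,\infty)$ and its range is an open interval $(a,b)$ ($a,b$ possibly infinite). $\ell:[0,T]\times\Omega\to\mathbb{R}$ is a non-anticipative functional (measurable with $\ell(t,\omega)=\ell(t,\omega(t\wedge\cdot))$) with $\ell(0,0)=0$; $\ell(T,\cdot)$ is the terminal loss. *)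

theory Defs
  imports "HOL-Probability.Probability"
begin

definition strictly_convex_on :: "real set \<Rightarrow> (real \<Rightarrow> real) \<Rightarrow> bool" where
  "strictly_convex_on S f \<longleftrightarrow> convex S \<and>
     (\<forall>x\<in>S. \<forall>y\<in>S. \<forall>u. x \<noteq> y \<and> 0 < u \<and> u < 1 \<longrightarrow>
        f (u * x + (1 - u) * y) < u * f x + (1 - u) * f y)"

text \<open>Skorokhod space D([0,T], R^d). A path is a function on the reals which is
  extended constantly outside [0,T] (canonical representative), right-continuous
  on [0,T) and with left limits on (0,T].\<close>
definition cadlag_paths :: "real \<Rightarrow> (real \<Rightarrow> 'a::topological_space) set" where
  "cadlag_paths T = {\<omega>. (\<forall>s. \<omega> s = \<omega> (max 0 (min T s)))
      \<and> (\<forall>t\<in>{0..<T}. continuous (at_right t) \<omega>)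
      \<and> (\<forall>t\<in>{0<..T}. \<exists>l. (\<omega> \<longlongrightarrow> l) (at_left t))}"

text \<open>Generators of the natural filtration F^0_t of the canonical process X(s)(w) = w(s).\<close>
definition coord_gen :: "real \<Rightarrow> real \<Rightarrow> (real \<Rightarrow> 'a::topological_space) set set" where
  "coord_gen T t = {{\<omega>\<in>cadlag_paths T. \<omega> s \<in> B} | s B. s \<in> {0..t} \<and> B \<in> sets borel}"

definition canon_space :: "real \<Rightarrow> real \<Rightarrow> (real \<Rightarrow> 'a::topological_space) measure" where
  "canon_space T t = sigma (cadlag_paths T) (coord_gen T t)"

definition non_anticipative ::
  "real \<Rightarrow> (real \<Rightarrow> (real \<Rightarrow> 'a::topological_space) \<Rightarrow> real) \<Rightarrow> bool" where
  "non_anticipative T l \<longleftrightarrow>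
     (\<lambda>(t,\<omega>). l t \<omega>) \<in> borel_measurable (restrict_space borel {0..T} \<Otimes>\<^sub>M canon_space T T)
     \<and> (\<forall>t\<in>{0..T}. \<forall>\<omega>\<in>cadlag_paths T. l t \<omega> = l t (\<lambda>s. \<omega> (min t s)))"

end

theory Submission
  imports Defs
begin

(*
  Strict convexity makes f' a strictly increasing continuous bijection of (0, oo) onto (a, b),
  and f' -> oo forces b = oo. Extending its inverse by 0 below a gives a continuous,
  nondecreasing G = inv_or_0 >= 0 with G -> 0 at -oo and G -> oo at +oo. By dominated convergence
  phi(c) = E G(theta (l(T) - c)) is continuous in c, tends to 0 as c -> oo and exceeds 1
  for small c, so phi(c) = 1 for some c by the intermediate value theorem; then
  z = G(theta (. - c)) works, and I_c is unbounded above because b = oo.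
*)

lemma strictly_convex_onD:
  assumes "strictly_convex_on S f" "x \<in> S" "y \<in> S" "x \<noteq> y" "0 < u" "u < 1"
  shows "f (u * x + (1 - u) * y) < u * f x + (1 - u) * f y"
  using assms unfolding strictly_convex_on_def by blast

lemma strictly_convex_on_imp_convex_on:
  assumes "strictly_convex_on S f"
  shows "convex_on S f"
proof
  show "convex S" using assms by (simp add: strictly_convex_on_def)
  fix t x y :: real assume t: "0 < t" "t < 1" and xy: "x \<in> S" "y \<in> S"
  show "f ((1 - t) *\<^sub>R x + t *\<^sub>R y) \<le> (1 - t) * f x + t * f y"
  proof (cases "x = y")
    case True
    then show ?thesis by (simp add: algebra_simps)
  next
    case False
    then show ?thesis
      using strictly_convex_onD[OF assms xy False, of "1 - t"] t by simp
  qed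
qed

lemma strictly_convex_on_deriv_strict_mono:
  assumes conv: "strictly_convex_on S f"
    and deriv: "\<And>x. x \<in> interior S \<Longrightarrow> (f has_real_derivative f' x) (at x)"
  shows "strict_mono_on (interior S) f'"
proof (rule strict_mono_onI)
  fix x y assume x: "x \<in> interior S" and y: "y \<in> interior S" and "x < y"
  define m where "m = (x + y) / 2"
  have S: "convex_on S f" "connected S"
    using conv strictly_convex_on_imp_convex_on convex_connected
    by (auto simp: strictly_convex_on_def)
  have xy: "x \<in> S" "y \<in> S" using x y interior_subset by auto
  have m: "m \<in> S"
    using conv xy convexD[of S x y "1/2" "1/2"]
    by (simp add: strictly_convex_on_def m_def add_divide_distrib)
  have tangent: "f' c * (m - c) \<le> f m - f c" if "c \<in> interior S" for c
    using convex_on_imp_above_tangent[OF S that m] deriv[OF that]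
    by (simp add: has_field_derivative_at_within)
  have "f m < (f x + f y) / 2"
    using strictly_convex_onD[OF conv xy, of "1/2"] \<open>x < y\<close>
    by (simp add: m_def add_divide_distrib)
  then have "f' x * ((y - x) / 2) < f' y * ((y - x) / 2)"
    using tangent[OF x] tangent[OF y] by (simp add: m_def field_simps)
  then show "f' x < f' y" using \<open>x < y\<close> by simp
qed

context prob_space
begin

lemma isCont_integral_shift:
  fixes F :: "real \<Rightarrow> real"
  assumes nonneg: "\<And>y. 0 \<le> F y" and mono: "mono F" and cont: "\<And>y. isCont F y"
    and int: "\<And>c. integrable M (\<lambda>\<omega>. F (X \<omega> - c))"
  shows "isCont (\<lambda>c. \<integral>\<omega>. F (X \<omega> - c) \<partial>M) c0"
  unfolding continuous_at_sequentially comp_def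
proof (intro allI impI)
  fix C :: "nat \<Rightarrow> real" assume C: "C \<longlonglongrightarrow> c0"
  \<comment> \<open>Clamping the sequence to \<open>[c0 - 1, c0 + 1]\<close> makes \<open>F (X - (c0 - 1))\<close> a dominating function.\<close>
  define D where "D n = max (c0 - 1) (min (c0 + 1) (C n))" for n
  have "(\<lambda>n. max (c0 - 1) (min (c0 + 1) (C n))) \<longlonglongrightarrow> max (c0 - 1) (min (c0 + 1) c0)"
    by (intro tendsto_max tendsto_min tendsto_const C)
  then have D: "D \<longlonglongrightarrow> c0" unfolding D_def by simp
  have "eventually (\<lambda>n. c0 - 1 < C n \<and> C n < c0 + 1) sequentially"
    by (intro eventually_conj order_tendstoD[OF C]) auto
  then have eq: "eventually (\<lambda>n. (\<integral>\<omega>. F (X \<omega> - D n) \<partial>M) = (\<integral>\<omega>. F (X \<omega> - C n) \<partial>M))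
      sequentially"
    by eventually_elim (simp add: D_def)
  have meas: "(\<lambda>\<omega>. F (X \<omega> - c)) \<in> borel_measurable M" for c
    using int by (rule borel_measurable_integrable)
  have "(\<lambda>n. \<integral>\<omega>. F (X \<omega> - D n) \<partial>M) \<longlonglongrightarrow> (\<integral>\<omega>. F (X \<omega> - c0) \<partial>M)"
  proof (rule integral_dominated_convergence[OF meas meas int[of "c0 - 1"]])
    show "AE \<omega> in M. (\<lambda>n. F (X \<omega> - D n)) \<longlonglongrightarrow> F (X \<omega> - c0)"
      by (intro AE_I2 isCont_tendsto_compose[OF cont] tendsto_intros D)
    show "AE \<omega> in M. norm (F (X \<omega> - D n)) \<le> F (X \<omega> - (c0 - 1))" for n
      using nonneg by (intro AE_I2) (auto simp: D_def intro!: monoD[OF mono])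
  qed
  then show "(\<lambda>n. \<integral>\<omega>. F (X \<omega> - C n) \<partial>M) \<longlonglongrightarrow> (\<integral>\<omega>. F (X \<omega> - c0) \<partial>M)"
    using eq by (rule Lim_transform_eventually)
qed

lemma integral_shift_tendsto_0:
  fixes F :: "real \<Rightarrow> real"
  assumes nonneg: "\<And>y. 0 \<le> F y" and mono: "mono F" and lim: "(F \<longlongrightarrow> 0) at_bot"
    and int: "\<And>c. integrable M (\<lambda>\<omega>. F (X \<omega> - c))"
  shows "((\<lambda>c. \<integral>\<omega>. F (X \<omega> - c) \<partial>M) \<longlongrightarrow> 0) at_top"
proof -
  have "((\<lambda>c. \<integral>\<omega>. F (X \<omega> - c) \<partial>M) \<longlongrightarrow> (\<integral>\<omega>. 0 \<partial>M)) at_top"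
  proof (rule integral_dominated_convergence_at_top[OF _ _ int[of 0]])
    show "(\<lambda>\<omega>. F (X \<omega> - c)) \<in> borel_measurable M" for c
      using int by (rule borel_measurable_integrable)
    have "filterlim (\<lambda>c. X \<omega> - c) at_bot at_top" for \<omega>
      unfolding filterlim_at_bot
    proof
      fix Z show "eventually (\<lambda>c. X \<omega> - c \<le> Z) at_top"
        using eventually_ge_at_top[of "X \<omega> - Z"] by eventually_elim simp
    qed
    then show "AE \<omega> in M. ((\<lambda>c. F (X \<omega> - c)) \<longlongrightarrow> 0) at_top"
      by (intro AE_I2 filterlim_compose[OF lim])
    show "\<forall>\<^sub>F c in at_top. AE \<omega> in M. norm (F (X \<omega> - c)) \<le> F (X \<omega> - 0)"
      using eventually_ge_at_top[of 0]
      by eventually_elim (use nonneg in \<open>auto intro!: AE_I2 monoD[OF mono]\<close>)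
  qed simp
  then show ?thesis by simp
qed

lemma integral_shift_exceeds:
  fixes F :: "real \<Rightarrow> real"
  assumes nonneg: "\<And>y. 0 \<le> F y" and lim: "filterlim F at_top at_top"
    and int: "\<And>c. integrable M (\<lambda>\<omega>. F (X \<omega> - c))"
  shows "\<exists>c. v < (\<integral>\<omega>. F (X \<omega> - c) \<partial>M)"
proof -
  \<comment> \<open>Truncation at \<open>v + 1\<close> gives a dominated family with the constant limit \<open>v + 1\<close>.\<close>
  have "((\<lambda>t. \<integral>\<omega>. min (F (X \<omega> + t)) (v + 1) \<partial>M) \<longlongrightarrow> (\<integral>\<omega>. v + 1 \<partial>M)) at_top"
  proof (rule integral_dominated_convergence_at_top[where w="\<lambda>_. \<bar>v + 1\<bar>"])
    show "(\<lambda>\<omega>. min (F (X \<omega> + t)) (v + 1)) \<in> borel_measurable M" for t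
      using borel_measurable_integrable[OF int[of "- t"]] by simp
    have "filterlim (\<lambda>t. F (X \<omega> + t)) at_top at_top" for \<omega>
      by (intro filterlim_compose[OF lim] filterlim_tendsto_add_at_top[OF tendsto_const filterlim_ident])
    then have ev: "eventually (\<lambda>t. v + 1 \<le> F (X \<omega> + t)) at_top" for \<omega>
      by (simp add: filterlim_at_top)
    have "((\<lambda>t. min (F (X \<omega> + t)) (v + 1)) \<longlongrightarrow> v + 1) at_top" for \<omega>
      by (rule tendsto_eventually, rule eventually_mono[OF ev[of \<omega>]]) simp
    then show "AE \<omega> in M. ((\<lambda>t. min (F (X \<omega> + t)) (v + 1)) \<longlongrightarrow> v + 1) at_top"
      by simp
    have "\<bar>min (F y) (v + 1)\<bar> \<le> \<bar>v + 1\<bar>" for y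
      using nonneg[of y] by (cases "F y \<le> v + 1") auto
    then show "\<forall>\<^sub>F t in at_top. AE \<omega> in M. norm (min (F (X \<omega> + t)) (v + 1)) \<le> \<bar>v + 1\<bar>"
      by (intro always_eventually allI AE_I2) simp
  qed simp_all
  then have "((\<lambda>t. \<integral>\<omega>. min (F (X \<omega> + t)) (v + 1) \<partial>M) \<longlongrightarrow> v + 1) at_top"
    by (simp add: prob_space)
  then have "eventually (\<lambda>t. v < (\<integral>\<omega>. min (F (X \<omega> + t)) (v + 1) \<partial>M)) at_top"
    by (rule order_tendstoD(1)) simp
  then obtain t where "v < (\<integral>\<omega>. min (F (X \<omega> + t)) (v + 1) \<partial>M)"
    by (auto dest: eventually_happens)
  also have "\<dots> \<le> (\<integral>\<omega>. F (X \<omega> - - t) \<partial>M)"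
    using int[of "- t"] by (intro integral_mono integrable_min) auto
  finally show ?thesis by blast
qed

lemma integral_shift_eq:
  fixes F :: "real \<Rightarrow> real"
  assumes "\<And>y. 0 \<le> F y" and "mono F" and "\<And>y. isCont F y"
    and "(F \<longlongrightarrow> 0) at_bot" and "filterlim F at_top at_top"
    and "\<And>c. integrable M (\<lambda>\<omega>. F (X \<omega> - c))" and "0 < v"
  shows "\<exists>c. (\<integral>\<omega>. F (X \<omega> - c) \<partial>M) = v"
proof -
  let ?\<phi> = "\<lambda>c. \<integral>\<omega>. F (X \<omega> - c) \<partial>M"
  obtain c1 where c1: "v < ?\<phi> c1"
    using integral_shift_exceeds assms by blast
  have "eventually (\<lambda>c. ?\<phi> c < v) at_top"
    using integral_shift_tendsto_0 assms by (intro order_tendstoD(2)) blast+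
  then have "eventually (\<lambda>c. c1 \<le> c \<and> ?\<phi> c < v) at_top"
    by (intro eventually_conj eventually_ge_at_top)
  then obtain c2 where c2: "c1 \<le> c2" "?\<phi> c2 < v"
    by (auto dest: eventually_happens)
  show ?thesis
    using IVT2[of ?\<phi> c2 v c1] c1 c2 isCont_integral_shift assms by force
qed

end

lemma filterlim_at_top_range_unbounded:
  fixes h :: "real \<Rightarrow> real" and b :: ereal
  assumes "filterlim h at_top at_top" and "\<And>x. 0 < x \<Longrightarrow> ereal (h x) < b"
  shows "b = \<infinity>"
proof (rule ccontr)
  assume "b \<noteq> \<infinity>"
  then obtain r where r: "b \<le> ereal r" by (cases b) auto
  have "eventually (\<lambda>x. r < h x \<and> 0 < x) at_top"
    using assms(1) by (intro eventually_conj) (auto simp: filterlim_at_top_dense)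
  then obtain x where "r < h x" "0 < x" by (auto dest: eventually_happens)
  moreover have "ereal (h x) < ereal r"
    using less_le_trans[OF assms(2)[OF \<open>0 < x\<close>] r] .
  ultimately show False by simp
qed

locale increasing_onto_ray =
  fixes h :: "real \<Rightarrow> real" and a :: ereal
  assumes strict_mono: "strict_mono_on {0<..} h"
    and cont: "continuous_on {0<..} h"
    and onto: "h ` {0<..} = {y. a < ereal y}"
begin

definition inv_or_0 :: "real \<Rightarrow> real" where
  "inv_or_0 y = (if a < ereal y then the_inv_into {0<..} h y else 0)"

lemma inj: "inj_on h {0<..}"
  using strict_mono by (rule strict_mono_on_imp_inj_on)

lemma lower_bound: "0 < x \<Longrightarrow> a < ereal (h x)"
  using onto by auto

lemma inv_or_0_pos: "a < ereal y \<Longrightarrow> 0 < inv_or_0 y"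
  using the_inv_into_into[OF inj, of y] onto by (auto simp: inv_or_0_def)

lemma h_inv_or_0: "a < ereal y \<Longrightarrow> h (inv_or_0 y) = y"
  using f_the_inv_into_f[OF inj, of y] onto by (auto simp: inv_or_0_def)

lemma inv_or_0_h: "0 < x \<Longrightarrow> inv_or_0 (h x) = x"
  using the_inv_into_f_f[OF inj] lower_bound by (simp add: inv_or_0_def)

lemma inv_or_0_nonneg: "0 \<le> inv_or_0 y"
  using inv_or_0_pos by (cases "a < ereal y") (auto simp: inv_or_0_def less_imp_le)

lemma inv_or_0_eq_0: "\<not> a < ereal y \<Longrightarrow> inv_or_0 y = 0"
  by (simp add: inv_or_0_def)

lemma mono_inv_or_0: "mono inv_or_0"
proof
  fix y y' :: real assume "y \<le> y'"
  show "inv_or_0 y \<le> inv_or_0 y'"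
  proof (cases "a < ereal y")
    case True
    then have "a < ereal y'" using \<open>y \<le> y'\<close> by (meson ereal_less_eq(3) order_less_le_trans)
    then show ?thesis
      using True \<open>y \<le> y'\<close> h_inv_or_0 inv_or_0_pos
        strict_mono_on_less_eq[OF strict_mono, of "inv_or_0 y" "inv_or_0 y'"] by simp
  qed (use inv_or_0_nonneg[of y'] in \<open>simp add: inv_or_0_eq_0\<close>)
qed

lemma inv_or_0_less:
  assumes "0 < e" "y < h e"
  shows "inv_or_0 y < e"
proof (cases "a < ereal y")
  case True
  then show ?thesis
    using assms h_inv_or_0[OF True] inv_or_0_pos[OF True]
      strict_mono_on_less[OF strict_mono, of "inv_or_0 y" e] by simp
qed (use assms in \<open>simp add: inv_or_0_eq_0\<close>)

lemma inv_or_0_tendsto_at_bot: "(inv_or_0 \<longlongrightarrow> 0) at_bot"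
proof (rule tendstoI)
  fix e :: real assume "0 < e"
  have "eventually (\<lambda>y. y < h e) at_bot" by (rule eventually_gt_at_bot)
  then show "eventually (\<lambda>y. dist (inv_or_0 y) 0 < e) at_bot"
    by eventually_elim
        (simp add: inv_or_0_less[OF \<open>0 < e\<close>] dist_real_def abs_of_nonneg[OF inv_or_0_nonneg])
qed

lemma filterlim_inv_or_0_at_top: "filterlim inv_or_0 at_top at_top"
  unfolding filterlim_at_top
proof
  fix K :: real
  have "eventually (\<lambda>y. h (max K 1) \<le> y) at_top" by (rule eventually_ge_at_top)
  then show "eventually (\<lambda>y. K \<le> inv_or_0 y) at_top"
  proof eventually_elim
    case (elim y)
    then have "inv_or_0 (h (max K 1)) \<le> inv_or_0 y" by (rule monoD[OF mono_inv_or_0])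
    then show ?case using inv_or_0_h[of "max K 1"] by simp
  qed
qed

lemma isCont_inv_or_0: "isCont inv_or_0 y"
proof (cases "a < ereal y")
  case True
  define x where "x = inv_or_0 y"
  have x: "0 < x" "h x = y" using inv_or_0_pos[OF True] h_inv_or_0[OF True] by (auto simp: x_def)
  have "isCont inv_or_0 (h x)"
  proof (rule isCont_inverse_function2[of "x/2" x "2*x"])
    show "x / 2 < x" "x < 2 * x" using x by auto
    show "inv_or_0 (h z) = z" if "x / 2 \<le> z" "z \<le> 2 * x" for z
      using inv_or_0_h that x by auto
    show "isCont h z" if "x / 2 \<le> z" "z \<le> 2 * x" for z
      using continuous_on_interior[OF cont, of z] that x by (simp add: interior_open)
  qed
  then show ?thesis using x by simp
next
  case False
  show ?thesis
    unfolding isCont_def inv_or_0_eq_0[OF False]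
  proof (rule tendstoI)
    fix e :: real assume "0 < e"
    have "ereal y < ereal (h e)"
      using False lower_bound[OF \<open>0 < e\<close>] by (meson le_less_trans not_less)
    then have "y < h e" by simp
    then have "eventually (\<lambda>y'. y' < h e) (at y)"
      using order_tendstoD(2)[OF tendsto_ident_at] by blast
    then show "eventually (\<lambda>y'. dist (inv_or_0 y') 0 < e) (at y)"
      by eventually_elim
        (simp add: inv_or_0_less[OF \<open>0 < e\<close>] dist_real_def abs_of_nonneg[OF inv_or_0_nonneg])
  qed
qed


lemma Sup_superlevel_set:
  assumes "0 < \<theta>"
  shows "Sup (ereal ` {x. a < ereal (\<theta> * (x - c))}) = \<top>"
  unfolding Sup_eq_top_iff
proof (intro allI impI)
  fix r :: ereal assume "r < \<top>"
  then obtain r' where "r \<le> ereal r'" by (cases r) auto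
  define x where "x = max (r' + 1) (h 1 / \<theta> + c)"
  have "h 1 / \<theta> \<le> x - c" by (simp add: x_def)
  then have "h 1 \<le> \<theta> * (x - c)"
    using assms by (simp add: pos_divide_le_eq mult.commute)
  then have "a < ereal (\<theta> * (x - c))"
    using lower_bound[of 1] by (meson ereal_less_eq(3) order_less_le_trans zero_less_one)
  moreover have "r' < x" by (simp add: x_def)
  then have "r < ereal x" using \<open>r \<le> ereal r'\<close> by (simp add: le_less_trans)
  ultimately show "\<exists>i\<in>ereal ` {x. a < ereal (\<theta> * (x - c))}. r < i" by blast
qed

lemma integral_inv_or_0_shift_eq:
  assumes "prob_space M" and "0 < \<theta>" and "0 < v"
    and "\<And>c. integrable M (\<lambda>\<omega>. inv_or_0 (\<theta> * (X \<omega> - c)))"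
  shows "\<exists>c. (\<integral>\<omega>. inv_or_0 (\<theta> * (X \<omega> - c)) \<partial>M) = v"
proof (rule prob_space.integral_shift_eq[OF assms(1), where F = "\<lambda>y. inv_or_0 (\<theta> * y)"])
  show "0 \<le> inv_or_0 (\<theta> * y)" for y
    by (rule inv_or_0_nonneg)
  show "isCont (\<lambda>y. inv_or_0 (\<theta> * y)) y" for y
    by (rule isCont_o2[OF _ isCont_inv_or_0]) simp
  show "mono (\<lambda>y. inv_or_0 (\<theta> * y))"
    using assms(2) by (auto intro!: monoI monoD[OF mono_inv_or_0])
  show "((\<lambda>y. inv_or_0 (\<theta> * y)) \<longlongrightarrow> 0) at_bot"
    using assms(2)
    by (intro filterlim_compose[OF inv_or_0_tendsto_at_bot]
        filterlim_tendsto_pos_mult_at_bot[OF tendsto_const] filterlim_ident)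
  show "filterlim (\<lambda>y. inv_or_0 (\<theta> * y)) at_top at_top"
    using assms(2)
    by (intro filterlim_compose[OF filterlim_inv_or_0_at_top]
        filterlim_tendsto_pos_mult_at_top[OF tendsto_const] filterlim_ident)
qed (use assms in auto)

end

lemma strictly_convex_deriv_increasing_onto_ray:
  assumes "strictly_convex_on {0..} f"
    and "\<And>x. 0 < x \<Longrightarrow> (f has_real_derivative f' x) (at x)"
    and "\<And>x. 0 < x \<Longrightarrow> (f' has_real_derivative f'' x) (at x)"
    and "f' ` {0<..} = {y. a < ereal y}"
  shows "increasing_onto_ray f' a"
proof
  show "strict_mono_on {0<..} f'"
    using strictly_convex_on_deriv_strict_mono[OF assms(1)] assms(2) by simp
  show "continuous_on {0<..} f'"
    using assms(3) by (intro continuous_at_imp_continuous_on ballI DERIV_isCont) auto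
qed (rule assms(4))

theorem proposition4p5:
  fixes T \<theta> :: real
    and P :: "(real \<Rightarrow> real ^ 'd::finite) measure"
    and f f' f'' :: "real \<Rightarrow> real"
    and a b :: ereal
    and l :: "real \<Rightarrow> (real \<Rightarrow> real ^ 'd) \<Rightarrow> real"
  defines "g \<equiv> the_inv_into {0<..} f'"
    and "I \<equiv> (\<lambda>c::real. {y / \<theta> + c | y. a < ereal y \<and> ereal y < b})"
  assumes T_pos: "0 < T"
    and P_prob: "prob_space P"
    and P_space: "space P = cadlag_paths T"
    and P_sets: "sets P = sets (canon_space T T)"
    and P_start: "measure P {\<omega>\<in>space P. \<omega> 0 = 0} = 1"
    and f_deriv: "\<And>x. 0 < x \<Longrightarrow> (f has_real_derivative f' x) (at x)"
    and f'_deriv: "\<And>x. 0 < x \<Longrightarrow> (f' has_real_derivative f'' x) (at x)"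
    and f_strict_convex: "strictly_convex_on {0..} f"
    and f_one: "f 1 = 0"
    and f'_range: "f' ` {0<..} = {y. a < ereal y \<and> ereal y < b}"
    and l_na: "non_anticipative T l"
    and l_zero: "l 0 (\<lambda>_. 0) = 0"
    and theta_pos: "0 < \<theta>"
    and f'_infty: "filterlim f' at_top at_top"
    and integrable: "\<And>c::real. integrable P
        (\<lambda>\<omega>. g (\<theta> * (l T \<omega> - c)) * indicator (I c) (l T \<omega>))"
  shows "\<exists>(c::real) (z::real \<Rightarrow> real).
           (\<forall>x. 0 \<le> z x)
         \<and> (\<forall>x\<in>I c. 0 < z x \<and> x - f' (z x) / \<theta> = c)
         \<and> (\<forall>x. x \<notin> I c \<longrightarrow> z x = 0)
         \<and> (\<integral>\<omega>. z (l T \<omega>) \<partial>P) = 1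
         \<and> measure P {\<omega>\<in>space P. ereal (l T \<omega>) < Sup (ereal ` I c)} = 1"
proof -
  interpret prob_space P by (rule P_prob)
  have b_inf: "b = \<infinity>"
    using f'_range by (intro filterlim_at_top_range_unbounded[OF f'_infty]) auto
  have "f' ` {0<..} = {y. a < ereal y}"
    using f'_range b_inf by simp
  then have "increasing_onto_ray f' a"
    by (intro strictly_convex_deriv_increasing_onto_ray[OF f_strict_convex f_deriv f'_deriv])
  then interpret increasing_onto_ray f' a .
  have I_eq: "I c = {x. a < ereal (\<theta> * (x - c))}" for c
  proof -
    have "x = y / \<theta> + c \<longleftrightarrow> y = \<theta> * (x - c)" for x y
      using theta_pos by (auto simp: field_simps)
    then show ?thesis unfolding I_def b_inf by auto
  qed
  have "g (\<theta> * (x - c)) * indicator (I c) x = inv_or_0 (\<theta> * (x - c))" for x c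
    by (simp add: inv_or_0_def g_def I_eq indicator_def)
  then obtain c where c: "(\<integral>\<omega>. inv_or_0 (\<theta> * (l T \<omega> - c)) \<partial>P) = 1"
    using integral_inv_or_0_shift_eq[OF P_prob theta_pos, of 1 "l T"] integrable by auto
  show ?thesis
  proof (intro exI[of _ c] exI[of _ "\<lambda>x. inv_or_0 (\<theta> * (x - c))"] conjI ballI allI impI)
    fix x assume "x \<in> I c"
    then have "a < ereal (\<theta> * (x - c))" by (simp add: I_eq)
    then show "0 < inv_or_0 (\<theta> * (x - c))" "x - f' (inv_or_0 (\<theta> * (x - c))) / \<theta> = c"
      using inv_or_0_pos h_inv_or_0 theta_pos by simp_all
  next
    show "measure P {\<omega>\<in>space P. ereal (l T \<omega>) < Sup (ereal ` I c)} = 1"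
      unfolding I_eq Sup_superlevel_set[OF theta_pos] by (simp add: prob_space top_ereal_def)
  qed (use c in \<open>simp_all add: inv_or_0_nonneg inv_or_0_eq_0 I_eq\<close>)
qed

end
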